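(* Let $n$ be an odd positive integer and let the parameter space be $\Theta=\{(\theta,\gamma_1,\dots,\gamma_n):\theta\in\{0,1\},\ \gamma_i\in[0,1]\ \forall i\}$. Conditionally on $(\theta,\boldsymbol\gamma)\in\Theta$, let $Y_1,\dots,Y_n\in\{0,1\}$ be independent with $\mathbb{P}(Y_i=1\mid\theta=1,\boldsymbol\gamma)=\mathbb{P}(Y_i=0\mid\theta=0,\boldsymbol\gamma)=\gamma_i$, and let $U\sim\mathrm{Bernoulli}(1/2)$ be independent of $\vec Y$. Decision rules are functions $\delta:\{0,1\}^n\times\{0,1\}\to\{0,1\}$ with loss $L(\theta,a)=\mathbb{I}(\theta\ne a)$ and risk $R(\delta,\xi)=\mathbb{E}[L(\theta,\delta(\vec Y,U))\mid\xi]$ for $\xi=(\theta,\boldsymbol\gamma)\in\Theta$. Then the coin flip rule $\delta^{cf}(\vec y,u)=u$ is minimax: $\sup_{\xi\in\Theta}R(\delta^{cf},\xi)=\inf_\delta\sup_{\xi\in\Theta}R(\delta,\xi)$. *)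

theory Defs
  imports Complex_Main "HOL-Library.FuncSet"
begin

text \<open>Binary values {0,1} are encoded as bool (True = 1, False = 0).
  A decision rule is any function delta :: bool list => bool => bool
  (its values on lists of length other than n are irrelevant).\<close>

definition Theta :: "nat \<Rightarrow> (bool \<times> (nat \<Rightarrow> real)) set" where
  "Theta n = UNIV \<times> ({..<n} \<rightarrow>\<^sub>E {0..1})"

definition probY :: "nat \<Rightarrow> bool \<Rightarrow> (nat \<Rightarrow> real) \<Rightarrow> bool list \<Rightarrow> real" where
  "probY n \<theta> \<gamma> ys = (\<Prod>i<n. if ys ! i = \<theta> then \<gamma> i else 1 - \<gamma> i)"

text \<open>Risk under 0-1 loss, with U ~ Bernoulli(1/2) independent of Y.\<close>
definition risk :: "nat \<Rightarrow> (bool list \<Rightarrow> bool \<Rightarrow> bool) \<Rightarrow> bool \<times> (nat \<Rightarrow> real) \<Rightarrow> real" where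
  "risk n \<delta> \<xi> = (case \<xi> of (\<theta>, \<gamma>) \<Rightarrow>
     (\<Sum>ys\<in>{ys. length ys = n}. \<Sum>u\<in>(UNIV::bool set).
        (1/2) * probY n \<theta> \<gamma> ys * (if \<theta> \<noteq> \<delta> ys u then 1 else 0)))"

end

theory Submission
  imports Defs
begin

text \<open>Against the coin flip every parameter yields risk exactly 1/2. Conversely, at the
  uninformative parameter \<open>\<gamma> = (1/2, \<dots>, 1/2)\<close> the law of the observations does not depend
  on \<open>\<theta>\<close>, so the risks of any rule at \<open>\<theta> = 0\<close> and \<open>\<theta> = 1\<close> sum to 1, and one of them is at
  least 1/2.\<close>

lemma lists_length_Suc_eq:
  "{ys. length ys = Suc n} = (\<lambda>(b, ys). b # ys) ` (UNIV \<times> {ys. length ys = n})"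
  by (auto simp: length_Suc_conv image_iff)

lemma sum_lists_prod_nth:
  fixes f :: "nat \<Rightarrow> bool \<Rightarrow> 'a::comm_semiring_1"
  shows "(\<Sum>ys\<in>{ys. length ys = n}. \<Prod>i<n. f i (ys ! i)) = (\<Prod>i<n. f i True + f i False)"
proof (induction n arbitrary: f)
  case 0
  then show ?case by simp
next
  case (Suc n)
  have inj: "inj_on (\<lambda>(b, ys). b # ys) (UNIV \<times> {ys::bool list. length ys = n})"
    by (auto simp: inj_on_def)
  have "(\<Sum>ys\<in>{ys. length ys = Suc n}. \<Prod>i<Suc n. f i (ys ! i))
      = (\<Sum>b\<in>UNIV. \<Sum>ys\<in>{ys. length ys = n}. f 0 b * (\<Prod>i<n. f (Suc i) (ys ! i)))"
    unfolding lists_length_Suc_eq sum.reindex[OF inj]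
    by (simp del: prod.lessThan_Suc add: prod.lessThan_Suc_shift sum.cartesian_product split_def)
  also have "\<dots> = (\<Sum>b\<in>UNIV. f 0 b * (\<Prod>i<n. f (Suc i) True + f (Suc i) False))"
    by (simp add: sum_distrib_left[symmetric] Suc.IH[of "\<lambda>i. f (Suc i)"])
  also have "\<dots> = (\<Prod>i<Suc n. f i True + f i False)"
    by (simp del: prod.lessThan_Suc add: prod.lessThan_Suc_shift UNIV_bool algebra_simps)
  finally show ?case .
qed

lemma sum_probY: "(\<Sum>ys\<in>{ys. length ys = n}. probY n \<theta> \<gamma> ys) = 1"
  unfolding probY_def by (subst sum_lists_prod_nth) (cases \<theta>; simp)

lemma probY_nonneg: "\<gamma> \<in> {..<n} \<rightarrow>\<^sub>E {0..1} \<Longrightarrow> 0 \<le> probY n \<theta> \<gamma> ys"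
  unfolding probY_def by (intro prod_nonneg) (auto simp: PiE_def Pi_def)

lemma risk_coin_flip: "risk n (\<lambda>ys u. u) \<xi> = 1/2"
proof -
  obtain \<theta> \<gamma> where \<xi>: "\<xi> = (\<theta>, \<gamma>)" by fastforce
  have "risk n (\<lambda>ys u. u) \<xi> = (\<Sum>ys\<in>{ys. length ys = n}. probY n \<theta> \<gamma> ys / 2)"
    unfolding risk_def \<xi> by (cases \<theta>) (auto simp: UNIV_bool intro!: sum.cong)
  also have "\<dots> = 1/2"
    by (simp add: sum_divide_distrib[symmetric] sum_probY)
  finally show ?thesis .
qed

lemma risk_le_1:
  assumes "\<xi> \<in> Theta n"
  shows "risk n \<delta> \<xi> \<le> 1"
proof -
  obtain \<theta> \<gamma> where \<xi>: "\<xi> = (\<theta>, \<gamma>)" and \<gamma>: "\<gamma> \<in> {..<n} \<rightarrow>\<^sub>E {0..1}"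
    using assms by (auto simp: Theta_def)
  have "risk n \<delta> \<xi> \<le> (\<Sum>ys\<in>{ys. length ys = n}. \<Sum>u\<in>(UNIV::bool set). (1/2) * probY n \<theta> \<gamma> ys)"
    unfolding risk_def \<xi> prod.case
    by (intro sum_mono mult_left_le) (auto simp: probY_nonneg[OF \<gamma>])
  also have "\<dots> = 1"
    by (simp add: UNIV_bool sum_probY)
  finally show ?thesis .
qed

lemma risk_True_plus_risk_False:
  assumes "\<And>i. i < n \<Longrightarrow> \<gamma> i = 1/2"
  shows "risk n \<delta> (True, \<gamma>) + risk n \<delta> (False, \<gamma>) = 1"
proof -
  have same_law: "probY n False \<gamma> ys = probY n True \<gamma> ys" for ys
    unfolding probY_def by (rule prod.cong) (auto simp: assms)
  have "risk n \<delta> (True, \<gamma>) + risk n \<delta> (False, \<gamma>)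
      = (\<Sum>ys\<in>{ys. length ys = n}. \<Sum>u\<in>(UNIV::bool set). (1/2) * probY n True \<gamma> ys)"
    unfolding risk_def prod.case sum.distrib[symmetric] same_law
    by (intro sum.cong refl) auto
  also have "\<dots> = 1"
    by (simp add: UNIV_bool sum_probY)
  finally show ?thesis .
qed

lemma uninformative_in_Theta: "(\<theta>, \<lambda>i. if i < n then 1/2 else undefined) \<in> Theta n"
  by (auto simp: Theta_def PiE_def extensional_def)

lemma half_le_SUP_risk: "1/2 \<le> (SUP \<xi>\<in>Theta n. risk n \<delta> \<xi>)"
proof -
  define \<gamma> :: "nat \<Rightarrow> real" where "\<gamma> = (\<lambda>i. if i < n then 1/2 else undefined)"
  have bdd: "bdd_above (risk n \<delta> ` Theta n)"
    using risk_le_1 by (auto intro!: bdd_aboveI2)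
  have le_SUP: "risk n \<delta> (\<theta>, \<gamma>) \<le> (SUP \<xi>\<in>Theta n. risk n \<delta> \<xi>)" for \<theta>
    unfolding \<gamma>_def by (rule cSUP_upper[OF uninformative_in_Theta bdd])
  have "risk n \<delta> (True, \<gamma>) + risk n \<delta> (False, \<gamma>) = 1"
    by (rule risk_True_plus_risk_False) (simp add: \<gamma>_def)
  with le_SUP[of True] le_SUP[of False] show ?thesis
    by linarith
qed

lemma SUP_risk_coin_flip: "(SUP \<xi>\<in>Theta n. risk n (\<lambda>ys u. u) \<xi>) = 1/2"
proof -
  have "Theta n \<noteq> {}"
    using uninformative_in_Theta by blast
  then show ?thesis
    by (simp add: risk_coin_flip)
qed

theorem theorem7:
  fixes n :: nat
  assumes "odd n"
  shows "(SUP \<xi>\<in>Theta n. risk n (\<lambda>ys u. u) \<xi>) = (INF \<delta>. SUP \<xi>\<in>Theta n. risk n \<delta> \<xi>)"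
proof (rule antisym)
  show "(SUP \<xi>\<in>Theta n. risk n (\<lambda>ys u. u) \<xi>) \<le> (INF \<delta>. SUP \<xi>\<in>Theta n. risk n \<delta> \<xi>)"
    unfolding SUP_risk_coin_flip by (rule cINF_greatest) (simp, rule half_le_SUP_risk)
  show "(INF \<delta>. SUP \<xi>\<in>Theta n. risk n \<delta> \<xi>) \<le> (SUP \<xi>\<in>Theta n. risk n (\<lambda>ys u. u) \<xi>)"
    by (rule cINF_lower) (auto intro: bdd_belowI[where m="1/2"] half_le_SUP_risk)
qed

end
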